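(* Let $g\in\mathcal{G}$. Then $g$ is predictable if and only if for every sub-polynomial function $\epsilon>0$ there exists a sub-polynomial function $h$ such that for all $x\in\mathbb{N}$ and all $y\in[1,x/h(x))$ satisfying $x+y\notin\delta_{\epsilon(x)}(g,x)$ it holds that $g(y)\ge g(x)/h(x)$.
   Context: $\mathcal{G}=\{g:\mathbb{Z}_{\ge0}\to\mathbb{R}: g(0)=0,\ g(1)=1,\ g(x)>0\ \forall x>0\}$. A function $f:\mathbb{R}_{\ge0}\to\mathbb{R}_{\ge0}$ is sub-polynomial if for every $\alpha>0$, $\lim_{x\to\infty}x^\alpha f(x)=\infty$ and $\lim_{x\to\infty}x^{-\alpha}f(x)=0$. For $x\in\mathbb{N}$ and $\epsilon>0$ let $\delta_\epsilon(g,x)=\{y\in\mathbb{N}: |g(y)-g(x)|\le\epsilon g(x)\}$. $g$ is predictable if for every $0<\gamma<1$ and every sub-polynomial $\epsilon$ there is $N$ such that for all $x\ge N$ and all $y\in[1,x^{1-\gamma})$ with $x+y\notin\delta_{\epsilon(x)}(g,x)$ we have $g(y)\ge x^{-\gamma}g(x)$. *)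

theory Defs
  imports "HOL-Analysis.Analysis"
begin

definition in_G :: "(nat \<Rightarrow> real) \<Rightarrow> bool" where
  "in_G g \<longleftrightarrow> g 0 = 0 \<and> g 1 = 1 \<and> (\<forall>x>0. g x > 0)"

definition subpoly :: "(real \<Rightarrow> real) \<Rightarrow> bool" where
  "subpoly f \<longleftrightarrow> (\<forall>x\<ge>0. f x \<ge> 0) \<and>
     (\<forall>\<alpha>>0. filterlim (\<lambda>x. x powr \<alpha> * f x) at_top at_top \<and>
             ((\<lambda>x. x powr (-\<alpha>) * f x) \<longlongrightarrow> 0) at_top)"

definition delta :: "real \<Rightarrow> (nat \<Rightarrow> real) \<Rightarrow> nat \<Rightarrow> nat set" where
  "delta \<epsilon> g x = {y. y \<ge> 1 \<and> \<bar>g y - g x\<bar> \<le> \<epsilon> * g x}"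

definition predictable :: "(nat \<Rightarrow> real) \<Rightarrow> bool" where
  "predictable g \<longleftrightarrow>
     (\<forall>\<gamma>::real. 0 < \<gamma> \<and> \<gamma> < 1 \<longrightarrow>
       (\<forall>\<epsilon>. subpoly \<epsilon> \<longrightarrow>
         (\<exists>N::nat. \<forall>x\<ge>N. \<forall>y::nat.
            1 \<le> real y \<and> real y < real x powr (1 - \<gamma>) \<and>
            x + y \<notin> delta (\<epsilon> (real x)) g x
            \<longrightarrow> g y \<ge> real x powr (-\<gamma>) * g x)))"

end

theory Submission
  imports Defs "HOL-Real_Asymp.Real_Asymp"
begin

text \<open>From \<open>h\<close> one gets
  predictability because a sub-polynomial \<open>h\<close> eventually lies below \<open>x\<^sup>\<gamma>\<close>.
  Conversely, choosing thresholds \<open>N\<^sub>k\<close> for \<open>\<gamma>\<^sub>k = 1/(k+2)\<close> and letting \<open>k(x)\<close>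
  be the largest index whose (enlarged) threshold lies below \<open>x\<close>, \<open>h(x) = x\<^bsup>1/(k(x)+2)\<^esup>\<close>
  is sub-polynomial since \<open>k(x) \<rightarrow> \<infinity>\<close>.\<close>

definition predictable_with :: "(nat \<Rightarrow> real) \<Rightarrow> (real \<Rightarrow> real) \<Rightarrow> (real \<Rightarrow> real) \<Rightarrow> bool" where
  "predictable_with g \<epsilon> h \<longleftrightarrow>
     (\<forall>x::nat. \<forall>y::nat. 1 \<le> x \<and> 1 \<le> y \<and> real y < real x / h (real x) \<and>
        x + y \<notin> delta (\<epsilon> (real x)) g x \<longrightarrow> g y \<ge> g x / h (real x))"

lemma subpoly_eventually_pos:
  assumes "subpoly f"
  shows "\<forall>\<^sub>F x in at_top. f x > 0"
proof -
  have "filterlim (\<lambda>x. x powr 1 * f x) at_top at_top"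
    using assms zero_less_one unfolding subpoly_def by blast
  then have "\<forall>\<^sub>F x in at_top. x powr 1 * f x > 0"
    by (simp add: filterlim_at_top_dense)
  with eventually_gt_at_top[of 0] show ?thesis
    by eventually_elim (auto simp: zero_less_mult_iff)
qed

lemma subpoly_eventually_less_powr:
  assumes "subpoly f" and "\<gamma> > 0"
  shows "\<forall>\<^sub>F x in at_top. f x < x powr \<gamma>"
proof -
  have "((\<lambda>x. x powr -\<gamma> * f x) \<longlongrightarrow> 0) at_top"
    using assms unfolding subpoly_def by simp
  then have "\<forall>\<^sub>F x in at_top. x powr -\<gamma> * f x < 1"
    by (rule order_tendstoD) simp
  with eventually_gt_at_top[of 0] show ?thesis
    by eventually_elim (simp add: powr_minus field_simps)
qed

lemma subpoly_eventually_eq: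
  assumes "subpoly f" and "\<forall>\<^sub>F x in at_top. f x = f' x" and "\<And>x. x \<ge> 0 \<Longrightarrow> f' x \<ge> 0"
  shows "subpoly f'"
  unfolding subpoly_def
proof (intro conjI allI impI)
  fix \<alpha> :: real
  assume "\<alpha> > 0"
  have eq_pos: "\<forall>\<^sub>F x in at_top. x powr \<alpha> * f x = x powr \<alpha> * f' x"
    and eq_neg: "\<forall>\<^sub>F x in at_top. x powr -\<alpha> * f x = x powr -\<alpha> * f' x"
    using assms(2) by (auto elim: eventually_mono)
  have "filterlim (\<lambda>x. x powr \<alpha> * f x) at_top at_top"
    and "((\<lambda>x. x powr -\<alpha> * f x) \<longlongrightarrow> 0) at_top"
    using assms(1) \<open>\<alpha> > 0\<close> unfolding subpoly_def by auto
  then show "filterlim (\<lambda>x. x powr \<alpha> * f' x) at_top at_top"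
    and "((\<lambda>x. x powr -\<alpha> * f' x) \<longlongrightarrow> 0) at_top"
    using filterlim_cong[OF refl refl eq_pos] tendsto_cong[OF eq_neg] by blast+
qed (use assms(3) in auto)

lemma subpoly_positive_variant:
  assumes "subpoly \<epsilon>"
  obtains \<epsilon>' M where "subpoly \<epsilon>'" "\<And>x. x > 0 \<Longrightarrow> \<epsilon>' x > 0" "\<And>x. x \<ge> M \<Longrightarrow> \<epsilon>' x = \<epsilon> x"
proof -
  obtain M where M: "\<And>x. x \<ge> M \<Longrightarrow> \<epsilon> x > 0"
    using subpoly_eventually_pos[OF assms] by (auto simp: eventually_at_top_linorder)
  define \<epsilon>' where "\<epsilon>' x = (if x \<ge> M then \<epsilon> x else 1)" for x
  have "subpoly \<epsilon>'"
  proof (rule subpoly_eventually_eq[OF assms])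
    show "\<forall>\<^sub>F x in at_top. \<epsilon> x = \<epsilon>' x"
      using eventually_ge_at_top[of M] by eventually_elim (simp add: \<epsilon>'_def)
  qed (use M in \<open>auto simp: \<epsilon>'_def less_imp_le\<close>)
  then show ?thesis
    using that[of \<epsilon>' M] M by (auto simp: \<epsilon>'_def)
qed

lemma subpoly_powr_vanishing_exponent:
  fixes e :: "real \<Rightarrow> real"
  assumes "(e \<longlongrightarrow> 0) at_top" and "\<And>x. e x \<ge> 0"
  shows "subpoly (\<lambda>x. if x < a then 0 else x powr e x)" (is "subpoly ?h")
  unfolding subpoly_def
proof (intro conjI allI impI)
  fix \<alpha> :: real
  assume "\<alpha> > 0"
  have "filterlim (\<lambda>x::real. x powr \<alpha>) at_top at_top"
    using \<open>\<alpha> > 0\<close> by real_asymp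
  moreover have "\<forall>\<^sub>F x in at_top. x powr \<alpha> \<le> x powr \<alpha> * ?h x"
    using eventually_ge_at_top[of "max a 1"]
    by eventually_elim (simp add: assms(2) ge_one_powr_ge_zero)
  ultimately show "filterlim (\<lambda>x. x powr \<alpha> * ?h x) at_top at_top"
    by (rule filterlim_at_top_mono)
  have "\<forall>\<^sub>F x in at_top. e x < \<alpha>/2"
    using assms(1) by (rule order_tendstoD) (use \<open>\<alpha> > 0\<close> in simp)
  then have upper: "\<forall>\<^sub>F x in at_top. x powr -\<alpha> * ?h x \<le> x powr -(\<alpha>/2)"
    using eventually_ge_at_top[of "max a 1"]
  proof eventually_elim
    case (elim x)
    then have "x powr -\<alpha> * ?h x \<le> x powr -\<alpha> * x powr (\<alpha>/2)"
      by (auto intro!: mult_left_mono powr_mono)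
    also have "\<dots> = x powr -(\<alpha>/2)"
      by (simp add: powr_add[symmetric])
    finally show ?case .
  qed
  have lim: "((\<lambda>x::real. x powr -(\<alpha>/2)) \<longlongrightarrow> 0) at_top"
    using \<open>\<alpha> > 0\<close> by real_asymp
  show "((\<lambda>x. x powr -\<alpha> * ?h x) \<longlongrightarrow> 0) at_top"
    by (rule tendsto_sandwich[OF _ upper tendsto_const lim]) (intro always_eventually allI, simp)
qed simp

lemma diagonal_index:
  fixes N :: "nat \<Rightarrow> nat"
  obtains K :: "real \<Rightarrow> nat"
  where "filterlim K at_top at_top" and "\<And>x. x \<ge> real (N 0) \<Longrightarrow> real (N (K x)) \<le> x"
proof -
  define S where "S x = {k. real (N k + k) \<le> x}" for x
  define K where "K x = Max (S x)" for x
  have fin: "finite (S x)" for x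
    by (rule finite_subset[of _ "{..nat \<lceil>x\<rceil>}"]) (auto simp: S_def le_nat_iff, linarith)
  have K_ge: "j \<le> K x" if "real (N j + j) \<le> x" for j x
    using that fin unfolding K_def by (intro Max_ge) (auto simp: S_def)
  have "filterlim K at_top at_top"
    unfolding filterlim_at_top
    using K_ge by (blast intro: eventually_mono[OF eventually_ge_at_top])
  moreover have "real (N (K x)) \<le> x" if "x \<ge> real (N 0)" for x
  proof -
    have "0 \<in> S x"
      using that by (simp add: S_def)
    then have "S x \<noteq> {}"
      by blast
    then have "K x \<in> S x"
      unfolding K_def using fin by (rule Max_in[rotated])
    then show ?thesis
      by (simp add: S_def)
  qed
  ultimately show ?thesis
    using that by blast
qed

lemma predictable_imp_predictable_with:
  assumes "predictable g" and "subpoly \<epsilon>"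
  shows "\<exists>h. subpoly h \<and> predictable_with g \<epsilon> h"
proof -
  define \<gamma> where "\<gamma> k = 1 / (real k + 2)" for k :: nat
  have "0 < \<gamma> k" "\<gamma> k < 1" for k
    by (simp_all add: \<gamma>_def field_simps)
  then have "\<forall>k. \<exists>N::nat. \<forall>x\<ge>N. \<forall>y::nat.
      1 \<le> real y \<and> real y < real x powr (1 - \<gamma> k) \<and> x + y \<notin> delta (\<epsilon> (real x)) g x
      \<longrightarrow> g y \<ge> real x powr (- \<gamma> k) * g x"
    using assms unfolding predictable_def by blast
  then obtain N where N: "\<And>k x y. x \<ge> N k \<Longrightarrow> 1 \<le> real y \<Longrightarrow> real y < real x powr (1 - \<gamma> k) \<Longrightarrow>
      x + y \<notin> delta (\<epsilon> (real x)) g x \<Longrightarrow> g y \<ge> real x powr (- \<gamma> k) * g x"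
    by metis
  obtain K where K_lim: "filterlim K at_top at_top"
    and K_le: "\<And>x. x \<ge> real (N 0) \<Longrightarrow> real (N (K x)) \<le> x"
    using diagonal_index[of N] by blast
  text \<open>Below \<open>N\<^sub>0\<close> we set \<open>h = 0\<close>: then \<open>x / h x = 0\<close>, so the condition holds vacuously.\<close>
  define h where "h x = (if x < real (N 0) then 0 else x powr \<gamma> (K x))" for x
  have "((\<lambda>x. \<gamma> (K x)) \<longlongrightarrow> 0) at_top"
  proof (rule filterlim_compose[OF _ K_lim])
    show "\<gamma> \<longlonglongrightarrow> 0"
      unfolding \<gamma>_def by real_asymp
  qed
  then have "subpoly h"
    unfolding h_def by (rule subpoly_powr_vanishing_exponent) (simp add: \<gamma>_def)
  moreover have "predictable_with g \<epsilon> h"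
    unfolding predictable_with_def
  proof (intro allI impI, elim conjE)
    fix x y :: nat
    assume x: "1 \<le> x" and y: "1 \<le> y" and y_less: "real y < real x / h (real x)"
      and far: "x + y \<notin> delta (\<epsilon> (real x)) g x"
    have x_ge: "real x \<ge> real (N 0)"
      using y_less y by (auto simp: h_def split: if_splits)
    then have h_x: "h (real x) = real x powr \<gamma> (K (real x))"
      by (simp add: h_def)
    have "real x / h (real x) = real x powr (1 - \<gamma> (K (real x)))"
      using x by (simp add: h_x powr_diff)
    moreover have "N (K (real x)) \<le> x"
      using K_le[OF x_ge] by simp
    ultimately have "g y \<ge> real x powr (- \<gamma> (K (real x))) * g x"
      using N y y_less far by simp
    then show "g y \<ge> g x / h (real x)"
      using x by (simp add: h_x powr_minus divide_inverse mult.commute)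
  qed
  ultimately show ?thesis
    by blast
qed

lemma predictable_with_imp_predictable:
  assumes "in_G g"
    and predictable_with_h: "\<And>\<epsilon>. subpoly \<epsilon> \<Longrightarrow> \<forall>x>0. \<epsilon> x > 0 \<Longrightarrow> \<exists>h. subpoly h \<and> predictable_with g \<epsilon> h"
  shows "predictable g"
  unfolding predictable_def
proof (intro allI impI, elim conjE)
  fix \<gamma> :: real and \<epsilon> :: "real \<Rightarrow> real"
  assume "0 < \<gamma>" "\<gamma> < 1" "subpoly \<epsilon>"
  obtain \<epsilon>' M where "subpoly \<epsilon>'" "\<And>x. x > 0 \<Longrightarrow> \<epsilon>' x > 0" and \<epsilon>'_eq: "\<And>x. x \<ge> M \<Longrightarrow> \<epsilon>' x = \<epsilon> x"
    using subpoly_positive_variant[OF \<open>subpoly \<epsilon>\<close>] by blast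
  then obtain h where "subpoly h" and h: "predictable_with g \<epsilon>' h"
    using predictable_with_h by blast
  have "\<forall>\<^sub>F x in at_top. 0 < h x \<and> h x < x powr \<gamma>"
    using subpoly_eventually_pos[OF \<open>subpoly h\<close>] subpoly_eventually_less_powr[OF \<open>subpoly h\<close> \<open>0 < \<gamma>\<close>]
    by eventually_elim simp
  then obtain B where B: "\<And>x. x \<ge> B \<Longrightarrow> 0 < h x \<and> h x < x powr \<gamma>"
    by (auto simp: eventually_at_top_linorder)
  show "\<exists>N::nat. \<forall>x\<ge>N. \<forall>y::nat.
      1 \<le> real y \<and> real y < real x powr (1 - \<gamma>) \<and> x + y \<notin> delta (\<epsilon> (real x)) g x
      \<longrightarrow> g y \<ge> real x powr (-\<gamma>) * g x"
  proof (intro exI[of _ "nat \<lceil>max B (max M 1)\<rceil>"] allI impI, elim conjE)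
    fix x y :: nat
    assume "x \<ge> nat \<lceil>max B (max M 1)\<rceil>" and y: "1 \<le> real y" "real y < real x powr (1 - \<gamma>)"
      and far: "x + y \<notin> delta (\<epsilon> (real x)) g x"
    then have "real x \<ge> B" "real x \<ge> M" "real x \<ge> 1"
      by linarith+
    then have h_pos: "0 < h (real x)" and h_less: "h (real x) < real x powr \<gamma>"
      and "\<epsilon>' (real x) = \<epsilon> (real x)"
      using B \<epsilon>'_eq by auto
    have "real x powr (1 - \<gamma>) = real x / real x powr \<gamma>"
      using \<open>real x \<ge> 1\<close> by (simp add: powr_diff)
    also have "\<dots> < real x / h (real x)"
      using h_pos h_less \<open>real x \<ge> 1\<close> by (intro divide_strict_left_mono) auto
    finally have "g y \<ge> g x / h (real x)"
      using h y far \<open>real x \<ge> 1\<close> \<open>\<epsilon>' (real x) = \<epsilon> (real x)\<close>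
      unfolding predictable_with_def by auto
    moreover have "real x powr (-\<gamma>) * g x \<le> g x / h (real x)"
    proof -
      have "g x > 0"
        using \<open>in_G g\<close> \<open>real x \<ge> 1\<close> unfolding in_G_def by auto
      moreover have "real x powr (-\<gamma>) \<le> 1 / h (real x)"
        using h_pos h_less by (simp add: powr_minus divide_inverse le_imp_inverse_le)
      ultimately show ?thesis
        by (simp add: divide_inverse mult.commute)
    qed
    ultimately show "g y \<ge> real x powr (-\<gamma>) * g x"
      by linarith
  qed
qed

theorem proposition20:
  fixes g :: "nat \<Rightarrow> real"
  assumes "in_G g"
  shows "predictable g \<longleftrightarrow>
    (\<forall>\<epsilon>. subpoly \<epsilon> \<and> (\<forall>x>0. \<epsilon> x > 0) \<longrightarrow>
      (\<exists>h. subpoly h \<and>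
        (\<forall>x::nat. \<forall>y::nat. 1 \<le> x \<and> 1 \<le> y \<and> real y < real x / h (real x) \<and>
           x + y \<notin> delta (\<epsilon> (real x)) g x
           \<longrightarrow> g y \<ge> g x / h (real x))))"
  using predictable_imp_predictable_with predictable_with_imp_predictable[OF assms]
  unfolding predictable_with_def by blast

end
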